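(* Let $\mathbb{Q}[[Z]]$ and $\mathbb{Q}[[X,Y]]$ be the formal power series rings, each equipped with the topology given by the filtration by total degree ($F_p^Z$, resp. $F_p^{X,Y}$, being the set of series having only terms of total degree $\ge p$). Set $z:=e^Z=\sum_{i\ge0}Z^i/i!\in\mathbb{Q}[[Z]]$, so that the Laurent polynomial ring $\mathbb{Q}[z,z^{-1}]$ is a subring of $\mathbb{Q}[[Z]]$. Define a $\mathbb{Q}$-linear map $\hat\mu\colon\mathbb{Q}[z,z^{-1}]\to\mathbb{Q}[[X,Y]]$ by $$\hat{\mu}(z^k)=\begin{cases}-\sum_{i=1}^k e^{iX}e^{(k-i)Y} & (k>0),\\ 0 & (k=0),\\ \sum_{i=0}^{|k|-1}e^{-iX}e^{(k+i)Y} & (k<0).\end{cases}$$ Then there exists a unique continuous map $\hat\mu\colon\mathbb{Q}[[Z]]\to\mathbb{Q}[[X,Y]]$ extending this map.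
   Context: Here $e^{W}$ denotes the formal exponential series $\sum_{i\ge0}W^i/i!$. The subspace topology on $\mathbb{Q}[z,z^{-1}]$ induced from $\mathbb{Q}[[Z]]$ coincides with the $I$-adic topology, where $I$ is the augmentation ideal (kernel of $\sum_j a_jz^j\mapsto\sum_j a_j$). *)

theory Defs
  imports "HOL-Computational_Algebra.Formal_Power_Series"
begin

text \<open>Q[[Z]] is rat fps. Q[[X,Y]] is represented by coefficient functions
  g :: nat => nat => rat, where g i j is the coefficient of X^i Y^j.\<close>

type_synonym ps2 = "nat \<Rightarrow> nat \<Rightarrow> rat"

definition filtZ :: "nat \<Rightarrow> rat fps set" where
  "filtZ p = {f. \<forall>n<p. fps_nth f n = 0}"

definition filtXY :: "nat \<Rightarrow> ps2 set" where
  "filtXY p = {g. \<forall>i j. i + j < p \<longrightarrow> g i j = 0}"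

definition cont_filt :: "(rat fps \<Rightarrow> ps2) \<Rightarrow> bool" where
  "cont_filt F \<longleftrightarrow> (\<forall>x p. \<exists>q. \<forall>y. y - x \<in> filtZ q \<longrightarrow>
       (\<lambda>i j. F y i j - F x i j) \<in> filtXY p)"

definition expXY :: "int \<Rightarrow> int \<Rightarrow> ps2" where
  "expXY a b = (\<lambda>i j. (of_int a) ^ i / of_nat (fact i) * ((of_int b) ^ j / of_nat (fact j)))"

definition mu :: "int \<Rightarrow> ps2" where
  "mu k = (if k > 0 then (\<lambda>i j. - (\<Sum>l\<in>{1..k}. expXY l (k - l) i j))
           else if k = 0 then (\<lambda>i j. 0)
           else (\<lambda>i j. \<Sum>l\<in>{0..\<bar>k\<bar> - 1}. expXY (- l) (k + l) i j))"

text \<open>z = e^Z, so z^k = fps_exp k in Q[[Z]].\<close>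
definition zpow :: "int \<Rightarrow> rat fps" where
  "zpow k = fps_exp (of_int k)"

end

theory Submission
  imports Defs
begin

text \<open>The extension is \<open>f \<mapsto> -e^X (X - Y)/(e^X - e^Y) \<cdot> (f(X) - f(Y))/(X - Y)\<close>: for
  \<open>f = z^k\<close> the factors \<open>X - Y\<close> cancel, and \<open>-e^X (e^(kX) - e^(kY))/(e^X - e^Y)\<close> is the
  telescoping geometric sum defining \<open>\<mu>(z^k)\<close>. The coefficient of \<open>X^i Y^j\<close> in the divided
  difference of \<open>f\<close> is the coefficient of \<open>Z^(i+j+1)\<close> in \<open>f\<close>, which gives continuity.
  Uniqueness holds because Laurent polynomials are dense: as \<open>z - 1 = Z + \<dots>\<close>, adding a
  multiple of \<open>(z - 1)^q\<close> adjusts the coefficient of \<open>Z^q\<close> without changing lower ones.\<close>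

unbundle fps_syntax

lemma sum_int_telescope:
  fixes f :: "int \<Rightarrow> 'a::ab_group_add"
  assumes "a \<le> b + 1"
  shows "(\<Sum>l\<in>{a..b}. f (l + 1) - f l) = f (b + 1) - f a"
proof -
  obtain n where "b = a - 1 + int n"
    using assms by (intro that[of "nat (b + 1 - a)"]) simp
  then show ?thesis
  proof (induction n arbitrary: b)
    case 0 then show ?case by simp
  next
    case (Suc n)
    have IH: "(\<Sum>l\<in>{a..b - 1}. f (l + 1) - f l) = f b - f a"
      using Suc.IH[of "b - 1"] Suc.prems by simp
    have "{a..b} = insert b {a..b - 1}"
      using Suc.prems by auto
    then show ?case by (simp add: IH)
  qed
qed

lemma sum_character_products_times_diff:
  fixes x y :: "int \<Rightarrow> 'a::comm_ring_1"
  assumes x: "\<And>m n. x (m + n) = x m * x n" and y: "\<And>m n. y (m + n) = y m * y n"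
    and "a \<le> b + 1"
  shows "(\<Sum>l\<in>{a..b}. x l * y (k - l)) * (x 1 - y 1) = x (b + 1) * y (k - b) - x a * y (k - a + 1)"
proof -
  have "x l * y (k - l) * (x 1 - y 1) = x (l + 1) * y (k - (l + 1) + 1) - x l * y (k - l + 1)" for l
    using x[of l 1] y[of "k - l" 1] by (simp add: algebra_simps)
  then show ?thesis
    using sum_int_telescope[OF \<open>a \<le> b + 1\<close>, of "\<lambda>l. x l * y (k - l + 1)"]
    by (simp add: sum_distrib_right)
qed

lemma fps_power_nth_of_order_one:
  fixes g :: "'a::comm_semiring_1 fps"
  assumes "g $ 0 = 0" "g $ 1 = 1" "n \<le> q"
  shows "(g ^ q) $ n = (if n = q then 1 else 0)"
proof -
  have "g = fps_X * fps_shift 1 g"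
  proof (intro fps_ext)
    fix m show "g $ m = (fps_X * fps_shift 1 g) $ m"
      using assms(1) by (cases m) simp_all
  qed
  then have "g ^ q = fps_X ^ q * fps_shift 1 g ^ q"
    by (metis power_mult_distrib)
  with assms show ?thesis
    by (simp add: fps_X_power_mult_nth fps_nth_power_0)
qed

text \<open>Series in \<open>X, Y\<close> are series in \<open>X\<close> with coefficients in \<open>\<bbbQ>[[Y]]\<close>: \<open>fps_const f\<close> is
  \<open>f(Y)\<close>, \<open>fps_in_X f\<close> is \<open>f(X)\<close> and \<open>fps_divdiff f\<close> is \<open>(f(X) - f(Y))/(X - Y)\<close>.\<close>

definition fps_in_X :: "'a::zero fps \<Rightarrow> 'a fps fps" where
  "fps_in_X f = Abs_fps (\<lambda>i. fps_const (f $ i))"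

definition fps_divdiff :: "'a::zero fps \<Rightarrow> 'a fps fps" where
  "fps_divdiff f = Abs_fps (\<lambda>i. Abs_fps (\<lambda>j. f $ (i + j + 1)))"

lemma fps_in_X_mult: "fps_in_X (f * g) = fps_in_X f * fps_in_X (g :: 'a::comm_semiring_1 fps)"
  by (intro fps_ext) (simp add: fps_in_X_def fps_mult_nth fps_sum_nth)

lemma fps_in_X_one: "fps_in_X 1 = 1"
  by (intro fps_ext) (simp add: fps_in_X_def)

lemma fps_divdiff_times_diff:
  "fps_divdiff f * (fps_X - fps_const fps_X) = fps_in_X f - fps_const (f :: 'a::comm_ring_1 fps)"
proof (intro fps_ext)
  fix i j
  have "(fps_divdiff f * (fps_X - fps_const fps_X)) $ i = (fps_X * fps_divdiff f) $ i - fps_divdiff f $ i * fps_X"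
    by (simp add: algebra_simps del: fps_X_mult_nth)
  then show "(fps_divdiff f * (fps_X - fps_const fps_X)) $ i $ j = (fps_in_X f - fps_const f) $ i $ j"
    by (simp add: fps_in_X_def fps_divdiff_def)
qed

lemma mult_fps_divdiff_nth:
  "(C * fps_divdiff f) $ i $ j = (\<Sum>u=0..i. \<Sum>v=0..j. C $ u $ v * f $ Suc (i + j - (v + u)))"
  by (simp add: fps_mult_nth fps_sum_nth fps_divdiff_def)

lemma fps_divdiff_sum:
  "fps_divdiff (\<Sum>k\<in>S. fps_const (a k) * g k)
     = (\<Sum>k\<in>S. fps_const (fps_const (a k :: 'a::comm_semiring_1)) * fps_divdiff (g k))"
  by (intro fps_ext) (simp add: fps_divdiff_def fps_sum_nth)

lemma mult_fps_divdiff_sum_nth: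
  "(C * fps_divdiff (\<Sum>k\<in>S. fps_const (a k) * g k)) $ i $ j
     = (\<Sum>k\<in>S. a k * (C * fps_divdiff (g k)) $ i $ j :: 'a::comm_semiring_1)"
  by (simp add: fps_divdiff_sum sum_distrib_left fps_sum_nth
      mult.left_commute[of C])

lemma cont_filt_mult_fps_divdiff: "cont_filt (\<lambda>f i j. (C * fps_divdiff f) $ i $ j)"
  unfolding cont_filt_def filtZ_def filtXY_def
proof (intro allI exI[of _ "Suc p" for p] impI CollectI)
  fix x y :: "rat fps" and p i j
  assume "y - x \<in> {f. \<forall>n<Suc p. f $ n = 0}" "i + j < p"
  then show "(C * fps_divdiff y) $ i $ j - (C * fps_divdiff x) $ i $ j = 0"
    by (simp add: mult_fps_divdiff_nth)
qed

lemma cont_filt_eqI: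
  assumes "cont_filt F" "cont_filt G"
    and dense: "\<And>f q. \<exists>g\<in>D. \<forall>n<q. g $ n = f $ n"
    and agree: "\<And>g. g \<in> D \<Longrightarrow> F g = G g"
  shows "F = G"
proof (intro ext)
  fix f i j
  obtain qF where qF: "\<And>g. g - f \<in> filtZ qF \<Longrightarrow> (\<lambda>i j. F g i j - F f i j) \<in> filtXY (i + j + 1)"
    using \<open>cont_filt F\<close> unfolding cont_filt_def by blast
  obtain qG where qG: "\<And>g. g - f \<in> filtZ qG \<Longrightarrow> (\<lambda>i j. G g i j - G f i j) \<in> filtXY (i + j + 1)"
    using \<open>cont_filt G\<close> unfolding cont_filt_def by blast
  obtain g where "g \<in> D" and "\<forall>n<max qF qG. g $ n = f $ n"
    using dense by blast
  then have "g - f \<in> filtZ qF" "g - f \<in> filtZ qG"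
    by (auto simp: filtZ_def)
  then have "F g i j = F f i j" "G g i j = G f i j"
    using qF qG by (auto simp: filtXY_def)
  with agree[OF \<open>g \<in> D\<close>] show "F f i j = G f i j" by simp
qed

definition fps_expX :: "int \<Rightarrow> 'a::field_char_0 fps fps" where
  "fps_expX k = fps_in_X (fps_exp (of_int k))"

definition fps_expY :: "int \<Rightarrow> 'a::field_char_0 fps fps" where
  "fps_expY k = fps_const (fps_exp (of_int k))"

lemma fps_expX_add: "fps_expX (a + b) = fps_expX a * fps_expX b"
  by (simp add: fps_expX_def fps_exp_add_mult fps_in_X_mult)

lemma fps_expY_add: "fps_expY (a + b) = fps_expY a * fps_expY b"
  by (simp add: fps_expY_def fps_exp_add_mult)

lemma fps_expX_0: "fps_expX 0 = 1"
  by (simp add: fps_expX_def fps_in_X_one)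

lemma fps_expY_0: "fps_expY 0 = 1"
  by (simp add: fps_expY_def)

lemma fps_expX_times_expY_nth: "(fps_expX a * fps_expY b) $ i $ j = expXY a b i j"
  by (simp add: fps_expX_def fps_expY_def fps_in_X_def expXY_def)

lemma fps_expX_minus_expY_neq_0: "fps_expX 1 - fps_expY 1 \<noteq> (0 :: 'a::field_char_0 fps fps)"
proof
  assume "fps_expX 1 - fps_expY 1 = (0 :: 'a fps fps)"
  then have "(fps_expX 1 - fps_expY 1 :: 'a fps fps) $ 1 $ 0 = 0" by simp
  then show False by (simp add: fps_expX_def fps_expY_def fps_in_X_def)
qed

lemma fps_divdiff_exp:
  "fps_divdiff (fps_exp (of_int k)) * (fps_X - fps_const fps_X) = fps_expX k - fps_expY k"
  by (simp add: fps_divdiff_times_diff fps_expX_def fps_expY_def)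

definition mu_fps :: "int \<Rightarrow> rat fps fps" where
  "mu_fps k = (if k > 0 then - (\<Sum>l\<in>{1..k}. fps_expX l * fps_expY (k - l))
               else if k = 0 then 0
               else (\<Sum>l\<in>{0..\<bar>k\<bar> - 1}. fps_expX (- l) * fps_expY (k + l)))"

lemma mu_fps_nth: "mu_fps k $ i $ j = mu k i j"
  by (simp add: mu_fps_def mu_def fps_sum_nth fps_expX_times_expY_nth)

lemma mu_fps_times_diff:
  "mu_fps k * (fps_expX 1 - fps_expY 1) = - fps_expX 1 * (fps_expX k - fps_expY k)"
proof -
  note telescope = sum_character_products_times_diff[of fps_expX fps_expY, OF fps_expX_add fps_expY_add]
  consider "k > 0" | "k = 0" | "k < 0" by linarith
  then show ?thesis
  proof cases
    case 1
    have "mu_fps k * (fps_expX 1 - fps_expY 1)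
        = - ((\<Sum>l\<in>{1..k}. fps_expX l * fps_expY (k - l)) * (fps_expX 1 - fps_expY 1))"
      using 1 by (simp add: mu_fps_def)
    also have "\<dots> = - (fps_expX (k + 1) * fps_expY 0 - fps_expX 1 * fps_expY k)"
      using 1 by (simp only: telescope) simp
    finally show ?thesis by (simp add: fps_expX_add fps_expY_0 algebra_simps)
  next
    case 2
    then show ?thesis by (simp add: mu_fps_def fps_expX_0 fps_expY_0)
  next
    case 3
    have "mu_fps k = (\<Sum>l\<in>{k + 1..0}. fps_expX l * fps_expY (k - l))"
      using 3 unfolding mu_fps_def by (auto intro!: sum.reindex_bij_witness[of _ uminus uminus])
    then have "mu_fps k * (fps_expX 1 - fps_expY 1)
        = (\<Sum>l\<in>{k + 1..0}. fps_expX l * fps_expY (k - l)) * (fps_expX 1 - fps_expY 1)"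
      by simp
    also have "\<dots> = fps_expX 1 * fps_expY k - fps_expX (k + 1) * fps_expY 0"
      using 3 by (simp only: telescope) simp
    finally show ?thesis by (simp add: fps_expX_add fps_expY_0 algebra_simps)
  qed
qed

definition mu_hat_kernel :: "rat fps fps" where
  "mu_hat_kernel = - fps_expX 1 * fps_right_inverse (fps_divdiff (fps_exp 1))
                                     (inverse (fps_divdiff (fps_exp 1) $ 0))"

lemma mu_hat_kernel_times_diff:
  "mu_hat_kernel * (fps_expX 1 - fps_expY 1) = - fps_expX 1 * (fps_X - fps_const fps_X)"
proof -
  define E :: "rat fps fps" where "E = fps_divdiff (fps_exp 1)"
  define R where "R = fps_right_inverse E (inverse (E $ 0))"
  have "E $ 0 $ 0 \<noteq> 0" by (simp add: E_def fps_divdiff_def)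
  then have ER: "E * R = 1"
    unfolding R_def by (intro fps_right_inverse inverse_mult_eq_1')
  have "fps_expX 1 - fps_expY 1 = E * (fps_X - fps_const fps_X)"
    using fps_divdiff_exp[of 1, symmetric] by (simp add: E_def)
  then have "mu_hat_kernel * (fps_expX 1 - fps_expY 1)
      = - fps_expX 1 * (E * R) * (fps_X - fps_const fps_X)"
    by (simp add: mu_hat_kernel_def E_def R_def mult_ac)
  then show ?thesis by (simp add: ER)
qed

definition mu_hat :: "rat fps \<Rightarrow> ps2" where
  "mu_hat = (\<lambda>f i j. (mu_hat_kernel * fps_divdiff f) $ i $ j)"

lemma mu_hat_zpow: "mu_hat (zpow k) = mu k"
proof -
  have "mu_hat_kernel * fps_divdiff (zpow k) * (fps_expX 1 - fps_expY 1)
      = mu_hat_kernel * (fps_expX 1 - fps_expY 1) * fps_divdiff (zpow k)"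
    by (simp only: mult_ac)
  also have "\<dots> = - fps_expX 1 * (fps_divdiff (zpow k) * (fps_X - fps_const fps_X))"
    by (simp only: mu_hat_kernel_times_diff mult_ac)
  also have "\<dots> = mu_fps k * (fps_expX 1 - fps_expY 1)"
    by (simp add: zpow_def fps_divdiff_exp mu_fps_times_diff)
  finally have "mu_hat_kernel * fps_divdiff (zpow k) = mu_fps k"
    using fps_expX_minus_expY_neq_0[where 'a = rat] by simp
  then show ?thesis by (simp add: mu_hat_def mu_fps_nth fun_eq_iff)
qed

lemma cont_filt_mu_hat: "cont_filt mu_hat"
  unfolding mu_hat_def by (rule cont_filt_mult_fps_divdiff)

lemma mu_hat_sum:
  "mu_hat (\<Sum>k\<in>S. fps_const (a k) * zpow k) = (\<lambda>i j. \<Sum>k\<in>S. a k * mu k i j)"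
  by (simp add: mu_hat_def fun_eq_iff mult_fps_divdiff_sum_nth flip: mu_hat_zpow)

lemma zpow_minus_one_power:
  "(zpow 1 - 1) ^ q = (\<Sum>k\<le>q. fps_const ((-1) ^ (q - k) * of_nat (q choose k)) * zpow (int k))"
proof -
  have "zpow 1 ^ k = zpow (int k)" for k
    by (simp add: zpow_def fps_exp_power_mult)
  moreover have "(- 1) ^ n = fps_const ((- 1) ^ n :: rat)" for n
    by (metis fps_const_neg fps_const_1_eq_1 fps_const_power)
  ultimately show ?thesis
    unfolding diff_conv_add_uminus binomial_ring
    by (simp add: fps_of_nat[symmetric] mult_ac)
qed

lemma zpow_polynomials_approx:
  "\<exists>a. \<forall>n<q. (\<Sum>k<q. fps_const (a k) * zpow (int k)) $ n = f $ n"
proof (induction q)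
  case 0
  show ?case by simp
next
  case (Suc q)
  then obtain a where a: "\<forall>n<q. (\<Sum>k<q. fps_const (a k) * zpow (int k)) $ n = f $ n" ..
  define L where "L = (\<Sum>k<q. fps_const (a k) * zpow (int k))"
  define c where "c = f $ q - L $ q"
  define a' where "a' k = (if k < q then a k else 0) + c * ((-1) ^ (q - k) * of_nat (q choose k))" for k
  have "(\<Sum>k<Suc q. fps_const (a' k) * zpow (int k)) = L + fps_const c * (zpow 1 - 1) ^ q"
    by (simp add: a'_def L_def zpow_minus_one_power distrib_left distrib_right sum.distrib sum_distrib_left
        mult.assoc lessThan_Suc_atMost[symmetric] flip: fps_const_mult fps_const_add)
  moreover have "(zpow 1 - 1) $ 0 = 0" "(zpow 1 - 1) $ 1 = 1"
    by (simp_all add: zpow_def)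
  ultimately have "\<forall>n<Suc q. (\<Sum>k<Suc q. fps_const (a' k) * zpow (int k)) $ n = f $ n"
    using a by (auto simp: L_def c_def fps_power_nth_of_order_one less_Suc_eq)
  then show ?case by blast
qed

definition laurent_polys :: "rat fps set" where
  "laurent_polys = {\<Sum>k\<in>S. fps_const (a k) * zpow k | S a. finite S}"

lemma laurent_polysI: "finite S \<Longrightarrow> (\<Sum>k\<in>S. fps_const (a k) * zpow k) \<in> laurent_polys"
  unfolding laurent_polys_def by blast

lemma laurent_polys_dense: "\<exists>g\<in>laurent_polys. \<forall>n<q. g $ n = f $ n"
proof -
  obtain a where a: "\<forall>n<q. (\<Sum>k<q. fps_const (a k) * zpow (int k)) $ n = f $ n"
    using zpow_polynomials_approx by blast
  have "(\<Sum>k<q. fps_const (a k) * zpow (int k)) = (\<Sum>k\<in>int ` {..<q}. fps_const (a (nat k)) * zpow k)"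
    by (simp add: sum.reindex)
  then have "(\<Sum>k<q. fps_const (a k) * zpow (int k)) \<in> laurent_polys"
    by (simp add: laurent_polysI)
  with a show ?thesis by blast
qed

theorem lemma2:
  shows "\<exists>!F :: rat fps \<Rightarrow> ps2. cont_filt F \<and>
     (\<forall>(S :: int set) (a :: int \<Rightarrow> rat). finite S \<longrightarrow>
        F (\<Sum>k\<in>S. fps_const (a k) * zpow k) = (\<lambda>i j. \<Sum>k\<in>S. a k * mu k i j))"
proof (rule ex1I[of _ mu_hat])
  show "cont_filt mu_hat \<and> (\<forall>S a. finite S \<longrightarrow>
      mu_hat (\<Sum>k\<in>S. fps_const (a k) * zpow k) = (\<lambda>i j. \<Sum>k\<in>S. a k * mu k i j))"
    by (simp add: cont_filt_mu_hat mu_hat_sum)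
next
  fix G
  assume G: "cont_filt G \<and> (\<forall>S a. finite S \<longrightarrow>
      G (\<Sum>k\<in>S. fps_const (a k) * zpow k) = (\<lambda>i j. \<Sum>k\<in>S. a k * mu k i j))"
  show "G = mu_hat"
  proof (rule cont_filt_eqI[OF _ cont_filt_mu_hat laurent_polys_dense])
    show "cont_filt G" using G ..
  next
    fix g assume "g \<in> laurent_polys"
    then obtain S a where "finite S" "g = (\<Sum>k\<in>S. fps_const (a k) * zpow k)"
      unfolding laurent_polys_def by blast
    then show "G g = mu_hat g"
      using G by (simp add: mu_hat_sum)
  qed
qed

end
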